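(* Let $\gamma\in[0,1)$. For a bounded function $U:\mathbb{R}^n\to\mathbb{R}$ define the Bellman backup $$B[U](x)=\min\Big\{c(x),\ \max\big\{r(x),\ \gamma\max_{u\in\mathcal{U}}\min_{d\in\mathcal{D}} U(f(x,u,d))\big\}\Big\}.$$ Then the value function $V$ defined in the context is the unique (bounded) solution of $V=B[V]$, and for all bounded functions $V_1,V_2:\mathbb{R}^n\to\mathbb{R}$, $\|B[V_1]-B[V_2]\|_\infty\le\gamma\|V_1-V_2\|_\infty$.
   Context: Setting: States $x\in\mathbb{R}^n$; compact sets $\mathcal{U}\subseteq\mathbb{R}^m$ (controls) and $\mathcal{D}\subseteq\mathbb{R}^\ell$ (disturbances); dynamics $f:\mathbb{R}^n\times\mathcal{U}\times\mathcal{D}\to\mathbb{R}^n$, Lipschitz continuous in the state. For sequences $\mathbf{u}=\{u_t\}_{t\ge0}\subset\mathcal{U}$, $\mathbf{d}=\{d_t\}_{t\ge0}\subset\mathcal{D}$, the trajectory is $\xi_x^{\mathbf{u},\mathbf{d}}(0)=x$, $\xi_x^{\mathbf{u},\mathbf{d}}(t+1)=f(\xi_x^{\mathbf{u},\mathbf{d}}(t),u_t,d_t)$ for $t\in\mathbb{Z}_+$. Let $r,c:\mathbb{R}^n\to\mathbb{R}$ be bounded Lipschitz continuous functions. A map $\phi$ from control sequences to disturbance sequences is a non-anticipative strategy if whenever $u_t=\bar u_t$ for all $t\in\{0,\dots,T\}$, then $\phi(\mathbf{u})_t=\phi(\bar{\mathbf{u}})_t$ for all $t\in\{0,\dots,T\}$;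 $\Phi$ is the set of all such strategies. Value function: $$V(x)=\inf_{\phi\in\Phi}\ \sup_{\mathbf{u}}\ \sup_{t\in\mathbb{Z}_+}\ \min\Big\{\gamma^t r\big(\xi_x^{\mathbf{u},\phi(\mathbf{u})}(t)\big),\ \min_{\tau=0,\dots,t}\gamma^\tau c\big(\xi_x^{\mathbf{u},\phi(\mathbf{u})}(\tau)\big)\Big\}$$ (the paper writes $\max_{\mathbf{u}}$ over control sequences). $\|\cdot\|_\infty$ is the supremum norm over $\mathbb{R}^n$. *)

theory Defs
  imports "HOL-Analysis.Analysis"
begin

fun traj :: "('x \<Rightarrow> 'u \<Rightarrow> 'd \<Rightarrow> 'x) \<Rightarrow> 'x \<Rightarrow> (nat \<Rightarrow> 'u) \<Rightarrow> (nat \<Rightarrow> 'd) \<Rightarrow> nat \<Rightarrow> 'x" where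
  "traj f x u d 0 = x"
| "traj f x u d (Suc t) = f (traj f x u d t) (u t) (d t)"

definition seqs :: "'a set \<Rightarrow> (nat \<Rightarrow> 'a) set" where
  "seqs A = {s. \<forall>t. s t \<in> A}"

definition nonanticipative :: "'u set \<Rightarrow> 'd set \<Rightarrow> ((nat \<Rightarrow> 'u) \<Rightarrow> (nat \<Rightarrow> 'd)) set" where
  "nonanticipative U D = {\<phi>.
     (\<forall>u \<in> seqs U. \<phi> u \<in> seqs D) \<and>
     (\<forall>u \<in> seqs U. \<forall>ub \<in> seqs U. \<forall>T::nat.
        (\<forall>t\<le>T. u t = ub t) \<longrightarrow> (\<forall>t\<le>T. \<phi> u t = \<phi> ub t))}"

definition value_fun ::
  "('x \<Rightarrow> 'u \<Rightarrow> 'd \<Rightarrow> 'x) \<Rightarrow> 'u set \<Rightarrow> 'd set \<Rightarrow> real \<Rightarrow> ('x \<Rightarrow> real) \<Rightarrow> ('x \<Rightarrow> real) \<Rightarrow> 'x \<Rightarrow> real" where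
  "value_fun f U D \<gamma> r c x =
     (INF \<phi> \<in> nonanticipative U D. SUP u \<in> seqs U. SUP t. 
        min (\<gamma> ^ t * r (traj f x u (\<phi> u) t))
            (Min ((\<lambda>\<tau>. \<gamma> ^ \<tau> * c (traj f x u (\<phi> u) \<tau>)) ` {..t})))"

text \<open>Bellman backup; max over u / min over d rendered as SUP / INF.\<close>
definition bellman ::
  "('x \<Rightarrow> 'u \<Rightarrow> 'd \<Rightarrow> 'x) \<Rightarrow> 'u set \<Rightarrow> 'd set \<Rightarrow> real \<Rightarrow> ('x \<Rightarrow> real) \<Rightarrow> ('x \<Rightarrow> real) \<Rightarrow> ('x \<Rightarrow> real) \<Rightarrow> 'x \<Rightarrow> real" where
  "bellman f U D \<gamma> r c W x =
     min (c x) (max (r x) (\<gamma> * (SUP u \<in> U. INF d \<in> D. W (f x u d))))"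

definition supnorm :: "('x \<Rightarrow> real) \<Rightarrow> real" where
  "supnorm g = (SUP x. \<bar>g x\<bar>)"

end

theory Submission
  imports Defs
begin

text \<open>Splitting a play after its first move, its reach-avoid payoff is the scalar backup
  \<open>min (c x) (max (r x) (\<gamma> * s))\<close> of the payoff \<open>s\<close> of the remaining play. A non-anticipative
  strategy sees the first control before choosing the first disturbance, strategies for the
  remaining game can be chosen separately after each first move, and the restriction of a
  strategy to the remaining game is again non-anticipative; hence the inf-sup over strategies
  and controls commutes with the split and gives \<open>V = B[V]\<close>. The scalar backup is monotone and
  \<open>\<gamma>\<close>-Lipschitz, and inf and sup are \<open>1\<close>-Lipschitz in the sup norm, so \<open>B\<close> is a
  \<open>\<gamma>\<close>-contraction, which has at most one bounded fixed point.\<close>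

definition stage_payoff ::
  "('x \<Rightarrow> 'u \<Rightarrow> 'd \<Rightarrow> 'x) \<Rightarrow> real \<Rightarrow> ('x \<Rightarrow> real) \<Rightarrow> ('x \<Rightarrow> real) \<Rightarrow> 'x \<Rightarrow> (nat \<Rightarrow> 'u) \<Rightarrow> (nat \<Rightarrow> 'd) \<Rightarrow> nat \<Rightarrow> real"
  where "stage_payoff f \<gamma> r c x u d t =
    min (\<gamma> ^ t * r (traj f x u d t)) (Min ((\<lambda>\<tau>. \<gamma> ^ \<tau> * c (traj f x u d \<tau>)) ` {..t}))"

definition play_payoff ::
  "('x \<Rightarrow> 'u \<Rightarrow> 'd \<Rightarrow> 'x) \<Rightarrow> real \<Rightarrow> ('x \<Rightarrow> real) \<Rightarrow> ('x \<Rightarrow> real) \<Rightarrow> 'x \<Rightarrow> (nat \<Rightarrow> 'u) \<Rightarrow> (nat \<Rightarrow> 'd) \<Rightarrow> real"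
  where "play_payoff f \<gamma> r c x u d = (SUP t. stage_payoff f \<gamma> r c x u d t)"

definition backup :: "real \<Rightarrow> ('x \<Rightarrow> real) \<Rightarrow> ('x \<Rightarrow> real) \<Rightarrow> 'x \<Rightarrow> real \<Rightarrow> real"
  where "backup \<gamma> r c x s = min (c x) (max (r x) (\<gamma> * s))"

lemma bellman_eq_backup:
  "bellman f U D \<gamma> r c W x = backup \<gamma> r c x (SUP u\<in>U. INF d\<in>D. W (f x u d))"
  by (simp add: bellman_def backup_def)

subsection \<open>Bounded families of reals\<close>

lemma bdd_above_image_if_abs_le:
  fixes g :: "'a \<Rightarrow> real"
  shows "(\<And>a. a \<in> A \<Longrightarrow> \<bar>g a\<bar> \<le> M) \<Longrightarrow> bdd_above (g ` A)"
  by (rule bdd_aboveI2[where M = M]) (auto simp: abs_le_iff)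

lemma bdd_below_image_if_abs_le:
  fixes g :: "'a \<Rightarrow> real"
  shows "(\<And>a. a \<in> A \<Longrightarrow> \<bar>g a\<bar> \<le> M) \<Longrightarrow> bdd_below (g ` A)"
  by (rule bdd_belowI2[where m = "-M"]) (metis abs_le_D2 minus_le_iff)

lemma abs_cSUP_le:
  fixes g :: "'a \<Rightarrow> real"
  assumes "A \<noteq> {}" "\<And>a. a \<in> A \<Longrightarrow> \<bar>g a\<bar> \<le> M"
  shows "\<bar>SUP a\<in>A. g a\<bar> \<le> M"
proof -
  obtain a where "a \<in> A" using assms(1) by blast
  have "g a \<le> (SUP a\<in>A. g a)"
    using \<open>a \<in> A\<close> bdd_above_image_if_abs_le[OF assms(2)] by (rule cSUP_upper)
  moreover have "(SUP a\<in>A. g a) \<le> M"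
    using assms by (intro cSUP_least) (auto simp: abs_le_iff)
  ultimately show ?thesis
    using assms(2)[OF \<open>a \<in> A\<close>] by (simp add: abs_le_iff)
qed

lemma abs_cINF_le:
  fixes g :: "'a \<Rightarrow> real"
  assumes "A \<noteq> {}" "\<And>a. a \<in> A \<Longrightarrow> \<bar>g a\<bar> \<le> M"
  shows "\<bar>INF a\<in>A. g a\<bar> \<le> M"
proof -
  obtain a where "a \<in> A" using assms(1) by blast
  have "(INF a\<in>A. g a) \<le> g a"
    using bdd_below_image_if_abs_le[OF assms(2)] \<open>a \<in> A\<close> by (rule cINF_lower)
  moreover have "-M \<le> (INF a\<in>A. g a)"
    by (rule cINF_greatest[OF assms(1)]) (metis assms(2) abs_le_D2 minus_le_iff)
  ultimately show ?thesis
    using assms(2)[OF \<open>a \<in> A\<close>] by (simp add: abs_le_iff)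
qed

lemma cINF_abs_diff_le:
  fixes g h :: "'a \<Rightarrow> real"
  assumes "A \<noteq> {}" "bdd_below (g ` A)" "bdd_below (h ` A)"
    and "\<And>a. a \<in> A \<Longrightarrow> \<bar>g a - h a\<bar> \<le> e"
  shows "\<bar>(INF a\<in>A. g a) - (INF a\<in>A. h a)\<bar> \<le> e"
proof -
  have "(INF a\<in>A. g a) \<le> (INF a\<in>A. h a) + e"
    if "bdd_below (g ` A)" "\<And>a. a \<in> A \<Longrightarrow> g a \<le> h a + e" for g h :: "'a \<Rightarrow> real"
  proof -
    have "(INF a\<in>A. g a) - e \<le> (INF a\<in>A. h a)"
    proof (rule cINF_greatest[OF assms(1)])
      fix a assume "a \<in> A"
      then have "(INF a\<in>A. g a) \<le> g a" using that(1) by (intro cINF_lower)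
      then show "(INF a\<in>A. g a) - e \<le> h a" using that(2)[OF \<open>a \<in> A\<close>] by simp
    qed
    then show ?thesis by simp
  qed
  from this[of g h] this[of h g] show ?thesis
    using assms by (force simp: abs_le_iff)
qed

lemma cSUP_abs_diff_le:
  fixes g h :: "'a \<Rightarrow> real"
  assumes "A \<noteq> {}" "bdd_above (g ` A)" "bdd_above (h ` A)"
    and "\<And>a. a \<in> A \<Longrightarrow> \<bar>g a - h a\<bar> \<le> e"
  shows "\<bar>(SUP a\<in>A. g a) - (SUP a\<in>A. h a)\<bar> \<le> e"
proof -
  have "(SUP a\<in>A. g a) \<le> (SUP a\<in>A. h a) + e"
    if "bdd_above (h ` A)" "\<And>a. a \<in> A \<Longrightarrow> g a \<le> h a + e" for g h :: "'a \<Rightarrow> real"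
  proof (rule cSUP_least[OF assms(1)])
    fix a assume "a \<in> A"
    then have "h a \<le> (SUP a\<in>A. h a)" using that(1) by (intro cSUP_upper)
    then show "g a \<le> (SUP a\<in>A. h a) + e" using that(2)[OF \<open>a \<in> A\<close>] by simp
  qed
  from this[of g h] this[of h g] show ?thesis
    using assms by (force simp: abs_le_iff)
qed

lemma cSUP_max_first_Suc:
  fixes P :: "nat \<Rightarrow> real"
  assumes "bdd_above (range P)"
  shows "(SUP t. max (P 0) (P (Suc t))) = (SUP t. P t)"
proof (rule antisym)
  show "(SUP t. max (P 0) (P (Suc t))) \<le> (SUP t. P t)"
    by (rule cSUP_least) (auto intro: cSUP_upper[OF _ assms])
  have bdd: "bdd_above (range (\<lambda>t. max (P 0) (P (Suc t))))"
    using assms by (auto simp: bdd_above_def intro: order_trans[OF max.boundedI])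
  show "(SUP t. P t) \<le> (SUP t. max (P 0) (P (Suc t)))"
  proof (rule cSUP_least)
    fix t
    have "P t \<le> max (P 0) (P (Suc (t - 1)))" by (cases t) auto
    also have "\<dots> \<le> (SUP t. max (P 0) (P (Suc t)))" by (rule cSUP_upper[OF UNIV_I bdd])
    finally show "P t \<le> (SUP t. max (P 0) (P (Suc t)))" .
  qed simp
qed

subsection \<open>The scalar backup\<close>

lemma mono_backup: "0 \<le> \<gamma> \<Longrightarrow> mono (backup \<gamma> r c x)"
  unfolding mono_def backup_def by (metis min.mono max.mono order_refl mult_left_mono)

lemma continuous_backup: "continuous (at s within A) (backup \<gamma> r c x)"
  unfolding backup_def by (intro continuous_intros)

lemma backup_cSUP:
  assumes "0 \<le> \<gamma>" "A \<noteq> {}" "bdd_above (g ` A)"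
  shows "backup \<gamma> r c x (SUP a\<in>A. g a) = (SUP a\<in>A. backup \<gamma> r c x (g a))"
proof -
  have "backup \<gamma> r c x (Sup (g ` A)) = Sup (backup \<gamma> r c x ` g ` A)"
    using assms by (intro continuous_at_Sup_mono mono_backup continuous_backup) auto
  then show ?thesis by (simp add: image_image)
qed

lemma backup_cINF:
  assumes "0 \<le> \<gamma>" "A \<noteq> {}" "bdd_below (g ` A)"
  shows "backup \<gamma> r c x (INF a\<in>A. g a) = (INF a\<in>A. backup \<gamma> r c x (g a))"
proof -
  have "backup \<gamma> r c x (Inf (g ` A)) = Inf (backup \<gamma> r c x ` g ` A)"
    using assms by (intro continuous_at_Inf_mono mono_backup continuous_backup) auto
  then show ?thesis by (simp add: image_image)
qed

lemma abs_backup_diff_le: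
  assumes "0 \<le> \<gamma>"
  shows "\<bar>backup \<gamma> r c x p - backup \<gamma> r c x q\<bar> \<le> \<gamma> * \<bar>p - q\<bar>"
proof -
  have "\<bar>backup \<gamma> r c x p - backup \<gamma> r c x q\<bar> \<le> \<bar>\<gamma> * p - \<gamma> * q\<bar>"
    unfolding backup_def by (auto simp: min_def max_def)
  also have "\<dots> = \<gamma> * \<bar>p - q\<bar>"
    using assms by (simp add: abs_mult right_diff_distrib[symmetric])
  finally show ?thesis .
qed

subsection \<open>Payoff of a play\<close>

lemma traj_Suc_shift:
  "traj f x u d (Suc t) = traj f (f x (u 0) (d 0)) (u \<circ> Suc) (d \<circ> Suc) t"
  by (induction t) auto

lemma stage_payoff_0: "stage_payoff f \<gamma> r c x u d 0 = min (r x) (c x)"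
  by (simp add: stage_payoff_def)

lemma stage_payoff_Suc:
  assumes "0 \<le> \<gamma>"
  shows "stage_payoff f \<gamma> r c x u d (Suc t) =
    min (c x) (\<gamma> * stage_payoff f \<gamma> r c (f x (u 0) (d 0)) (u \<circ> Suc) (d \<circ> Suc) t)"
proof -
  define y where "y = traj f (f x (u 0) (d 0)) (u \<circ> Suc) (d \<circ> Suc)"
  define C where "C = (\<lambda>\<tau>. \<gamma> ^ \<tau> * c (y \<tau>)) ` {..t}"
  have "Min ((\<lambda>\<tau>. \<gamma> ^ \<tau> * c (traj f x u d \<tau>)) ` {..Suc t}) = Min (insert (c x) ((*) \<gamma> ` C))"
    by (simp add: atMost_Suc_eq_insert_0 image_image traj_Suc_shift C_def y_def mult.assoc
        del: traj.simps(2))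
  also have "\<dots> = min (c x) (\<gamma> * Min C)"
    using assms by (simp add: C_def Min_insert hom_Min_commute min_mult_distrib_left)
  finally show ?thesis
    using assms by (simp add: stage_payoff_def traj_Suc_shift C_def y_def min_mult_distrib_left
        mult.assoc min.left_commute del: traj.simps(2))
qed

locale bounded_discounted_payoff =
  fixes \<gamma> :: real and r c :: "'x \<Rightarrow> real" and M :: real
  assumes discount_nonneg: "0 \<le> \<gamma>" and discount_le_1: "\<gamma> \<le> 1"
    and abs_r_le: "\<bar>r y\<bar> \<le> M" and abs_c_le: "\<bar>c y\<bar> \<le> M"
begin

lemma abs_stage_payoff_le: "\<bar>stage_payoff f \<gamma> r c x u d t\<bar> \<le> M"
proof -
  have discounted: "\<bar>\<gamma> ^ s * z\<bar> \<le> M" if "\<bar>z\<bar> \<le> M" for s z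
  proof -
    have "\<bar>\<gamma> ^ s\<bar> * \<bar>z\<bar> \<le> 1 * M"
      using discount_nonneg discount_le_1 that by (intro mult_mono) (auto simp: power_le_one)
    then show ?thesis by (simp add: abs_mult)
  qed
  let ?C = "(\<lambda>\<tau>. \<gamma> ^ \<tau> * c (traj f x u d \<tau>)) ` {..t}"
  have "Min ?C \<in> ?C" by (rule Min_in) auto
  then obtain \<tau> where "Min ?C = \<gamma> ^ \<tau> * c (traj f x u d \<tau>)" by blast
  then have "\<bar>Min ?C\<bar> \<le> M" using discounted[OF abs_c_le] by simp
  moreover have "\<bar>\<gamma> ^ t * r (traj f x u d t)\<bar> \<le> M" by (rule discounted[OF abs_r_le])
  ultimately show ?thesis unfolding stage_payoff_def by (metis min_def)
qed

lemma bdd_above_stage_payoff: "bdd_above (range (stage_payoff f \<gamma> r c x u d))"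
  using abs_stage_payoff_le by (rule bdd_above_image_if_abs_le)

lemma abs_play_payoff_le: "\<bar>play_payoff f \<gamma> r c x u d\<bar> \<le> M"
  unfolding play_payoff_def using abs_stage_payoff_le by (rule abs_cSUP_le[OF UNIV_not_empty])

lemma play_payoff_Suc_shift:
  "play_payoff f \<gamma> r c x u d =
    backup \<gamma> r c x (play_payoff f \<gamma> r c (f x (u 0) (d 0)) (u \<circ> Suc) (d \<circ> Suc))"
proof -
  let ?P = "stage_payoff f \<gamma> r c x u d"
  let ?Q = "stage_payoff f \<gamma> r c (f x (u 0) (d 0)) (u \<circ> Suc) (d \<circ> Suc)"
  have step: "max (?P 0) (?P (Suc t)) = backup \<gamma> r c x (?Q t)" for t
    using discount_nonneg
    by (simp add: stage_payoff_0 stage_payoff_Suc backup_def max_min_distrib2 min.commute)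
  have "play_payoff f \<gamma> r c x u d = (SUP t. max (?P 0) (?P (Suc t)))"
    unfolding play_payoff_def using bdd_above_stage_payoff by (rule cSUP_max_first_Suc[symmetric])
  also have "\<dots> = (SUP t. backup \<gamma> r c x (?Q t))"
    by (simp only: step)
  also have "\<dots> = backup \<gamma> r c x (SUP t. ?Q t)"
    using discount_nonneg bdd_above_stage_payoff by (intro backup_cSUP[symmetric]) auto
  finally show ?thesis by (simp add: play_payoff_def)
qed

end

subsection \<open>Non-anticipative strategies\<close>

lemma case_nat_comp_Suc [simp]: "case_nat a s \<circ> Suc = s"
  by (simp add: fun_eq_iff)

lemma seqs_case_nat: "a \<in> A \<Longrightarrow> s \<in> seqs A \<Longrightarrow> case_nat a s \<in> seqs A"
  by (simp add: seqs_def split: nat.split)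

lemma seqs_comp_Suc: "s \<in> seqs A \<Longrightarrow> s \<circ> Suc \<in> seqs A"
  by (simp add: seqs_def)

lemma seqs_not_empty: "A \<noteq> {} \<Longrightarrow> seqs A \<noteq> {}"
  by (auto simp: seqs_def)

lemma nonanticipative_not_empty: "D \<noteq> {} \<Longrightarrow> nonanticipative U D \<noteq> {}"
proof -
  assume "D \<noteq> {}"
  then obtain d where "d \<in> D" by blast
  then have "(\<lambda>_ _. d) \<in> nonanticipative U D"
    by (simp add: nonanticipative_def seqs_def)
  then show ?thesis by blast
qed

lemma nonanticipative_in_seqs:
  "\<phi> \<in> nonanticipative U D \<Longrightarrow> u \<in> seqs U \<Longrightarrow> \<phi> u \<in> seqs D"
  by (simp add: nonanticipative_def)

lemma nonanticipativeD:
  assumes "\<phi> \<in> nonanticipative U D" "u \<in> seqs U" "u' \<in> seqs U"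
    and "\<And>t. t \<le> T \<Longrightarrow> u t = u' t" "t \<le> T"
  shows "\<phi> u t = \<phi> u' t"
  using assms unfolding nonanticipative_def by blast

lemma nonanticipative_first_move:
  assumes "\<phi> \<in> nonanticipative U D" "a \<in> U" "u \<in> seqs U" "u' \<in> seqs U"
  shows "\<phi> (case_nat a u) 0 = \<phi> (case_nat a u') 0"
  using assms by (auto intro: nonanticipativeD[where T = 0] seqs_case_nat)

lemma nonanticipative_tail:
  assumes \<phi>: "\<phi> \<in> nonanticipative U D" and "a \<in> U"
  shows "(\<lambda>u. \<phi> (case_nat a u) \<circ> Suc) \<in> nonanticipative U D"
  unfolding nonanticipative_def
proof (intro CollectI conjI ballI allI impI)
  fix u assume "u \<in> seqs U"
  then show "\<phi> (case_nat a u) \<circ> Suc \<in> seqs D"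
    by (rule seqs_comp_Suc[OF nonanticipative_in_seqs[OF \<phi> seqs_case_nat[OF \<open>a \<in> U\<close>]]])
next
  fix u u' T t
  assume "u \<in> seqs U" "u' \<in> seqs U" "\<forall>t\<le>T. u t = u' t" "t \<le> T"
  moreover have "case_nat a u s = case_nat a u' s" if "s \<le> Suc T" for s
    using \<open>\<forall>t\<le>T. u t = u' t\<close> that by (cases s) auto
  ultimately have "\<phi> (case_nat a u) (Suc t) = \<phi> (case_nat a u') (Suc t)"
    using \<open>a \<in> U\<close> by (auto intro: nonanticipativeD[OF \<phi>, where T = "Suc T"] seqs_case_nat)
  then show "(\<phi> (case_nat a u) \<circ> Suc) t = (\<phi> (case_nat a u') \<circ> Suc) t" by simp
qed

lemma nonanticipative_case_nat:
  assumes \<delta>: "\<And>a. a \<in> U \<Longrightarrow> \<delta> a \<in> D"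
    and \<psi>: "\<And>a. a \<in> U \<Longrightarrow> \<psi> a \<in> nonanticipative U D"
  shows "(\<lambda>u. case_nat (\<delta> (u 0)) (\<psi> (u 0) (u \<circ> Suc))) \<in> nonanticipative U D"
  unfolding nonanticipative_def
proof (intro CollectI conjI ballI allI impI)
  fix u assume "u \<in> seqs U"
  then have "u 0 \<in> U" by (simp add: seqs_def)
  then show "case_nat (\<delta> (u 0)) (\<psi> (u 0) (u \<circ> Suc)) \<in> seqs D"
    by (intro seqs_case_nat \<delta> nonanticipative_in_seqs[OF \<psi>] seqs_comp_Suc \<open>u \<in> seqs U\<close>)
next
  fix u u' T t
  assume u: "u \<in> seqs U" "u' \<in> seqs U" and agree: "\<forall>t\<le>T. u t = u' t" and "t \<le> T"
  have "u 0 \<in> U" using u by (simp add: seqs_def)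
  have "\<psi> (u 0) (u \<circ> Suc) s = \<psi> (u 0) (u' \<circ> Suc) s" if "Suc s \<le> T" for s
    using agree that
    by (intro nonanticipativeD[OF \<psi>[OF \<open>u 0 \<in> U\<close>] seqs_comp_Suc[OF u(1)] seqs_comp_Suc[OF u(2)],
          where T = "T - 1"]) auto
  then show "case_nat (\<delta> (u 0)) (\<psi> (u 0) (u \<circ> Suc)) t
      = case_nat (\<delta> (u' 0)) (\<psi> (u' 0) (u' \<circ> Suc)) t"
    using agree \<open>t \<le> T\<close> by (simp split: nat.split)
qed

subsection \<open>Dynamic programming principle\<close>

locale reach_avoid_game = bounded_discounted_payoff \<gamma> r c M
    for \<gamma> and r c :: "'x \<Rightarrow> real" and M +
  fixes f :: "'x \<Rightarrow> 'u \<Rightarrow> 'd \<Rightarrow> 'x" and U :: "'u set" and D :: "'d set"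
  assumes controls_not_empty: "U \<noteq> {}" and disturbances_not_empty: "D \<noteq> {}"
begin

abbreviation V :: "'x \<Rightarrow> real" where
  "V \<equiv> value_fun f U D \<gamma> r c"

definition strategy_value :: "'x \<Rightarrow> ((nat \<Rightarrow> 'u) \<Rightarrow> nat \<Rightarrow> 'd) \<Rightarrow> real" where
  "strategy_value y \<psi> = (SUP u\<in>seqs U. play_payoff f \<gamma> r c y u (\<psi> u))"

definition continuation_value :: "'x \<Rightarrow> ((nat \<Rightarrow> 'u) \<Rightarrow> nat \<Rightarrow> 'd) \<Rightarrow> real" where
  "continuation_value x \<phi> =
    (SUP u\<in>seqs U. play_payoff f \<gamma> r c (f x (u 0) (\<phi> u 0)) (u \<circ> Suc) (\<phi> u \<circ> Suc))"

lemma strategies_not_empty: "nonanticipative U D \<noteq> {}"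
  by (rule nonanticipative_not_empty[OF disturbances_not_empty])

lemma control_seqs_not_empty: "seqs U \<noteq> {}"
  by (rule seqs_not_empty[OF controls_not_empty])

lemma value_eq_INF_strategy_value:
  "V y = (INF \<psi>\<in>nonanticipative U D. strategy_value y \<psi>)"
  by (simp add: value_fun_def strategy_value_def play_payoff_def stage_payoff_def)

lemma abs_strategy_value_le: "\<bar>strategy_value y \<psi>\<bar> \<le> M"
  unfolding strategy_value_def
  by (rule abs_cSUP_le[OF control_seqs_not_empty]) (rule abs_play_payoff_le)

lemma abs_value_le: "\<bar>V y\<bar> \<le> M"
  unfolding value_eq_INF_strategy_value
  by (rule abs_cINF_le[OF strategies_not_empty]) (rule abs_strategy_value_le)

lemma abs_continuation_value_le: "\<bar>continuation_value x \<phi>\<bar> \<le> M"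
  unfolding continuation_value_def
  by (rule abs_cSUP_le[OF control_seqs_not_empty]) (rule abs_play_payoff_le)

lemma strategy_value_eq_backup:
  "strategy_value x \<phi> = backup \<gamma> r c x (continuation_value x \<phi>)"
proof -
  have "strategy_value x \<phi> = (SUP u\<in>seqs U.
      backup \<gamma> r c x (play_payoff f \<gamma> r c (f x (u 0) (\<phi> u 0)) (u \<circ> Suc) (\<phi> u \<circ> Suc)))"
    unfolding strategy_value_def by (rule SUP_cong[OF refl play_payoff_Suc_shift])
  also have "\<dots> = backup \<gamma> r c x (continuation_value x \<phi>)"
    unfolding continuation_value_def
    by (rule backup_cSUP[symmetric, OF discount_nonneg control_seqs_not_empty
          bdd_above_image_if_abs_le[OF abs_play_payoff_le]])
  finally show ?thesis .
qed

lemma abs_INF_value_le: "\<bar>INF d\<in>D. V (f x a d)\<bar> \<le> M"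
  by (rule abs_cINF_le[OF disturbances_not_empty abs_value_le])

lemma continuation_value_case_nat_le:
  assumes "\<And>a. a \<in> U \<Longrightarrow> strategy_value (f x a (\<delta> a)) (\<psi> a) \<le> b"
  shows "continuation_value x (\<lambda>u. case_nat (\<delta> (u 0)) (\<psi> (u 0) (u \<circ> Suc))) \<le> b"
  unfolding continuation_value_def
proof (rule cSUP_least[OF control_seqs_not_empty])
  fix u assume "u \<in> seqs U"
  then have "u 0 \<in> U" by (simp add: seqs_def)
  have "play_payoff f \<gamma> r c (f x (u 0) (\<delta> (u 0))) (u \<circ> Suc) (\<psi> (u 0) (u \<circ> Suc))
      \<le> strategy_value (f x (u 0) (\<delta> (u 0))) (\<psi> (u 0))"
    unfolding strategy_value_def
    using seqs_comp_Suc[OF \<open>u \<in> seqs U\<close>] bdd_above_image_if_abs_le[OF abs_play_payoff_le]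
    by (rule cSUP_upper)
  also have "\<dots> \<le> b" using assms[OF \<open>u 0 \<in> U\<close>] .
  finally show "play_payoff f \<gamma> r c
      (f x (u 0) (case_nat (\<delta> (u 0)) (\<psi> (u 0) (u \<circ> Suc)) 0)) (u \<circ> Suc)
      (case_nat (\<delta> (u 0)) (\<psi> (u 0) (u \<circ> Suc)) \<circ> Suc) \<le> b"
    by simp
qed

lemma value_first_move_le_continuation_value:
  assumes \<phi>: "\<phi> \<in> nonanticipative U D" and "a \<in> U"
  shows "V (f x a (\<phi> (case_nat a (\<lambda>_. a)) 0)) \<le> continuation_value x \<phi>"
proof -
  define d where "d = \<phi> (case_nat a (\<lambda>_. a)) 0"
  have const: "(\<lambda>_. a) \<in> seqs U" using \<open>a \<in> U\<close> by (simp add: seqs_def)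
  have first_move: "\<phi> (case_nat a u) 0 = d" if "u \<in> seqs U" for u
    unfolding d_def using \<phi> \<open>a \<in> U\<close> that const by (rule nonanticipative_first_move)
  have "V (f x a d) \<le> strategy_value (f x a d) (\<lambda>u. \<phi> (case_nat a u) \<circ> Suc)"
    unfolding value_eq_INF_strategy_value
    using bdd_below_image_if_abs_le[OF abs_strategy_value_le] nonanticipative_tail[OF \<phi> \<open>a \<in> U\<close>]
    by (rule cINF_lower)
  also have "\<dots> \<le> continuation_value x \<phi>"
    unfolding strategy_value_def continuation_value_def
  proof (rule cSUP_least[OF control_seqs_not_empty])
    fix u assume "u \<in> seqs U"
    have "play_payoff f \<gamma> r c (f x a d) u (\<phi> (case_nat a u) \<circ> Suc) =
        play_payoff f \<gamma> r c (f x (case_nat a u 0) (\<phi> (case_nat a u) 0))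
          (case_nat a u \<circ> Suc) (\<phi> (case_nat a u) \<circ> Suc)"
      by (simp add: first_move[OF \<open>u \<in> seqs U\<close>])
    also have "\<dots> \<le> (SUP u'\<in>seqs U.
        play_payoff f \<gamma> r c (f x (u' 0) (\<phi> u' 0)) (u' \<circ> Suc) (\<phi> u' \<circ> Suc))"
      using seqs_case_nat[OF \<open>a \<in> U\<close> \<open>u \<in> seqs U\<close>] bdd_above_image_if_abs_le[OF abs_play_payoff_le]
      by (rule cSUP_upper)
    finally show "play_payoff f \<gamma> r c (f x a d) u (\<phi> (case_nat a u) \<circ> Suc) \<le> \<dots>" .
  qed
  finally show ?thesis by (simp add: d_def)
qed

lemma INF_continuation_value_le:
  "(INF \<phi>\<in>nonanticipative U D. continuation_value x \<phi>) \<le> (SUP a\<in>U. INF d\<in>D. V (f x a d))"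
  (is "_ \<le> ?R")
proof (rule field_le_epsilon)
  fix e :: real assume "0 < e"
  have "\<forall>a\<in>U. \<exists>d. d \<in> D \<and> V (f x a d) < ?R + e"
  proof
    fix a assume "a \<in> U"
    have "(INF d\<in>D. V (f x a d)) \<le> ?R"
      using \<open>a \<in> U\<close> bdd_above_image_if_abs_le[OF abs_INF_value_le] by (rule cSUP_upper)
    then have "(INF d\<in>D. V (f x a d)) < ?R + e" using \<open>0 < e\<close> by simp
    then show "\<exists>d. d \<in> D \<and> V (f x a d) < ?R + e"
      by (subst (asm) cINF_less_iff[OF disturbances_not_empty
            bdd_below_image_if_abs_le[OF abs_value_le]]) blast
  qed
  from bchoice[OF this] obtain \<delta> where \<delta>: "\<forall>a\<in>U. \<delta> a \<in> D \<and> V (f x a (\<delta> a)) < ?R + e"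
    by blast
  have "\<forall>a\<in>U. \<exists>\<psi>. \<psi> \<in> nonanticipative U D \<and> strategy_value (f x a (\<delta> a)) \<psi> < ?R + e"
  proof
    fix a assume "a \<in> U"
    then have "V (f x a (\<delta> a)) < ?R + e" using \<delta> by blast
    then show "\<exists>\<psi>. \<psi> \<in> nonanticipative U D \<and> strategy_value (f x a (\<delta> a)) \<psi> < ?R + e"
      unfolding value_eq_INF_strategy_value
      by (subst (asm) cINF_less_iff[OF strategies_not_empty
            bdd_below_image_if_abs_le[OF abs_strategy_value_le]]) blast
  qed
  from bchoice[OF this] obtain \<psi> where
    \<psi>: "\<forall>a\<in>U. \<psi> a \<in> nonanticipative U D \<and> strategy_value (f x a (\<delta> a)) (\<psi> a) < ?R + e"
    by blast
  let ?\<phi> = "\<lambda>u. case_nat (\<delta> (u 0)) (\<psi> (u 0) (u \<circ> Suc))"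
  have "?\<phi> \<in> nonanticipative U D"
    using \<delta> \<psi> by (intro nonanticipative_case_nat) auto
  then have "(INF \<phi>\<in>nonanticipative U D. continuation_value x \<phi>) \<le> continuation_value x ?\<phi>"
    by (rule cINF_lower[OF bdd_below_image_if_abs_le[OF abs_continuation_value_le]])
  also have "\<dots> \<le> ?R + e"
    using \<psi> by (intro continuation_value_case_nat_le) (simp add: less_imp_le)
  finally show "(INF \<phi>\<in>nonanticipative U D. continuation_value x \<phi>) \<le> ?R + e" .
qed

lemma INF_continuation_value_ge:
  "(SUP a\<in>U. INF d\<in>D. V (f x a d)) \<le> (INF \<phi>\<in>nonanticipative U D. continuation_value x \<phi>)"
proof (rule cINF_greatest[OF strategies_not_empty], rule cSUP_least[OF controls_not_empty])
  fix \<phi> a assume \<phi>: "\<phi> \<in> nonanticipative U D" and "a \<in> U"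
  have "(\<lambda>_. a) \<in> seqs U" using \<open>a \<in> U\<close> by (simp add: seqs_def)
  then have "case_nat a (\<lambda>_. a) \<in> seqs U" by (rule seqs_case_nat[OF \<open>a \<in> U\<close>])
  then have "\<phi> (case_nat a (\<lambda>_. a)) 0 \<in> D"
    using nonanticipative_in_seqs[OF \<phi>] by (simp add: seqs_def)
  then have "(INF d\<in>D. V (f x a d)) \<le> V (f x a (\<phi> (case_nat a (\<lambda>_. a)) 0))"
    by (rule cINF_lower[OF bdd_below_image_if_abs_le[OF abs_value_le]])
  also have "\<dots> \<le> continuation_value x \<phi>"
    using \<phi> \<open>a \<in> U\<close> by (rule value_first_move_le_continuation_value)
  finally show "(INF d\<in>D. V (f x a d)) \<le> continuation_value x \<phi>" .
qed

lemma value_fixpoint: "V = bellman f U D \<gamma> r c V"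
proof
  fix x
  have "V x = (INF \<phi>\<in>nonanticipative U D. backup \<gamma> r c x (continuation_value x \<phi>))"
    by (simp add: value_eq_INF_strategy_value strategy_value_eq_backup)
  also have "\<dots> = backup \<gamma> r c x (INF \<phi>\<in>nonanticipative U D. continuation_value x \<phi>)"
    by (rule backup_cINF[symmetric, OF discount_nonneg strategies_not_empty
          bdd_below_image_if_abs_le[OF abs_continuation_value_le]])
  also have "\<dots> = backup \<gamma> r c x (SUP a\<in>U. INF d\<in>D. V (f x a d))"
    by (simp only: order_antisym[OF INF_continuation_value_le INF_continuation_value_ge])
  finally show "V x = bellman f U D \<gamma> r c V x"
    by (simp add: bellman_eq_backup)
qed

end

subsection \<open>Contraction and uniqueness\<close>

lemma abs_le_supnorm:
  fixes g :: "'a \<Rightarrow> real"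
  assumes "bounded (range g)"
  shows "\<bar>g x\<bar> \<le> supnorm g"
proof -
  obtain B where "\<And>y. \<bar>g y\<bar> \<le> B" using assms by (meson bounded_real rangeI)
  then have "bdd_above (range (\<lambda>y. \<bar>g y\<bar>))" by (intro bdd_above_image_if_abs_le) simp
  then show ?thesis unfolding supnorm_def by (rule cSUP_upper[OF UNIV_I])
qed

lemma supnorm_le: "(\<And>x. \<bar>g x\<bar> \<le> e) \<Longrightarrow> supnorm g \<le> e"
  unfolding supnorm_def by (rule cSUP_least) auto

lemma supnorm_bellman_diff_le:
  fixes V1 V2 :: "'x \<Rightarrow> real"
  assumes "U \<noteq> {}" "D \<noteq> {}" "0 \<le> \<gamma>" "bounded (range V1)" "bounded (range V2)"
  shows "supnorm (\<lambda>x. bellman f U D \<gamma> r c V1 x - bellman f U D \<gamma> r c V2 x)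
    \<le> \<gamma> * supnorm (\<lambda>x. V1 x - V2 x)"
proof (rule supnorm_le)
  fix x
  let ?N = "supnorm (\<lambda>x. V1 x - V2 x)"
  obtain B1 B2 where B1: "\<And>y. \<bar>V1 y\<bar> \<le> B1" and B2: "\<And>y. \<bar>V2 y\<bar> \<le> B2"
    using assms(4,5) by (meson bounded_real rangeI)
  have diff: "\<bar>V1 y - V2 y\<bar> \<le> ?N" for y
    by (rule abs_le_supnorm[OF bounded_minus_comp[OF assms(4,5)]])
  have "\<bar>(INF d\<in>D. V1 (f x u d)) - (INF d\<in>D. V2 (f x u d))\<bar> \<le> ?N" for u
    by (rule cINF_abs_diff_le[OF assms(2) bdd_below_image_if_abs_le[OF B1]
          bdd_below_image_if_abs_le[OF B2] diff])
  then have "\<bar>(SUP u\<in>U. INF d\<in>D. V1 (f x u d)) - (SUP u\<in>U. INF d\<in>D. V2 (f x u d))\<bar> \<le> ?N"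
    by (rule cSUP_abs_diff_le[OF assms(1)
          bdd_above_image_if_abs_le[OF abs_cINF_le[OF assms(2) B1]]
          bdd_above_image_if_abs_le[OF abs_cINF_le[OF assms(2) B2]]])
  then show "\<bar>bellman f U D \<gamma> r c V1 x - bellman f U D \<gamma> r c V2 x\<bar> \<le> \<gamma> * ?N"
    unfolding bellman_eq_backup
    by (meson abs_backup_diff_le[OF assms(3)] mult_left_mono[OF _ assms(3)] order_trans)
qed

lemma fixpoint_unique_if_contraction:
  fixes T :: "('a \<Rightarrow> real) \<Rightarrow> 'a \<Rightarrow> real"
  assumes "\<gamma> < 1" "bounded (range V)" "bounded (range W)" "T V = V" "T W = W"
    and "supnorm (\<lambda>x. T V x - T W x) \<le> \<gamma> * supnorm (\<lambda>x. V x - W x)"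
  shows "V = W"
proof -
  let ?s = "supnorm (\<lambda>x. V x - W x)"
  have le: "\<bar>V x - W x\<bar> \<le> ?s" for x
    by (rule abs_le_supnorm[OF bounded_minus_comp[OF assms(2,3)]])
  have "?s \<le> \<gamma> * ?s" using assms(4-6) by simp
  then have "(1 - \<gamma>) * ?s \<le> 0" by (simp add: algebra_simps)
  then have "?s \<le> 0" using assms(1) by (simp add: mult_le_0_iff)
  then have "\<bar>V x - W x\<bar> \<le> 0" for x using le by (rule order_trans[rotated])
  then show "V = W" by (simp add: fun_eq_iff)
qed

theorem theorem2:
  fixes f :: "real^'n \<Rightarrow> real^'m \<Rightarrow> real^'l \<Rightarrow> real^'n"
    and U :: "(real^'m) set" and D :: "(real^'l) set"
    and r c :: "real^'n \<Rightarrow> real" and \<gamma> :: real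
  assumes "compact U" "U \<noteq> {}" "compact D" "D \<noteq> {}"
    and "\<exists>L. \<forall>u\<in>U. \<forall>d\<in>D. L-lipschitz_on UNIV (\<lambda>x. f x u d)"
    and "bounded (range r)" "\<exists>L. L-lipschitz_on UNIV r"
    and "bounded (range c)" "\<exists>L. L-lipschitz_on UNIV c"
    and "0 \<le> \<gamma>" "\<gamma> < 1"
  shows "bounded (range (value_fun f U D \<gamma> r c))
       \<and> value_fun f U D \<gamma> r c = bellman f U D \<gamma> r c (value_fun f U D \<gamma> r c)
       \<and> (\<forall>W. bounded (range W) \<and> W = bellman f U D \<gamma> r c W \<longrightarrow> W = value_fun f U D \<gamma> r c)
       \<and> (\<forall>V1 V2. bounded (range V1) \<and> bounded (range V2) \<longrightarrow>
            supnorm (\<lambda>x. bellman f U D \<gamma> r c V1 x - bellman f U D \<gamma> r c V2 x)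
              \<le> \<gamma> * supnorm (\<lambda>x. V1 x - V2 x))"
proof -
  obtain M where "\<forall>y \<in> range r \<union> range c. \<bar>y\<bar> \<le> M"
    using bounded_Un assms(6,8) bounded_real by metis
  then interpret reach_avoid_game \<gamma> r c M f U D
    using assms by unfold_locales auto
  have contraction: "\<forall>V1 V2. bounded (range V1) \<and> bounded (range V2) \<longrightarrow>
      supnorm (\<lambda>x. bellman f U D \<gamma> r c V1 x - bellman f U D \<gamma> r c V2 x)
        \<le> \<gamma> * supnorm (\<lambda>x. V1 x - V2 x)"
    using supnorm_bellman_diff_le[OF assms(2,4,10)] by blast
  have bounded: "bounded (range V)"
    using abs_value_le by (auto simp: bounded_real)
  have unique: "\<forall>W. bounded (range W) \<and> W = bellman f U D \<gamma> r c W \<longrightarrow> W = V"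
  proof (intro allI impI, elim conjE)
    fix W assume W: "bounded (range W)" "W = bellman f U D \<gamma> r c W"
    show "W = V"
      by (rule fixpoint_unique_if_contraction[OF assms(11) W(1) bounded W(2)[symmetric]
            value_fixpoint[symmetric]])
        (use contraction W(1) bounded in blast)
  qed
  show ?thesis
    by (intro conjI bounded value_fixpoint unique contraction)
qed

end
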